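(* Let $k\ge 1$. There is no strategy proof mechanism locating $k$ facilities on $[0,1]$ whose approximation ratio for the Gini index of utilities is bounded; that is, for every strategy proof mechanism $M$ for $k$ facilities and every constant $c>0$ there exist a number of agents $n$ and a profile $x=(x_1,\dots,x_n)\in[0,1]^n$ such that $G_u(M(x)) > c\cdot \min_{Y} G_u(Y)$, where the minimum ranges over all placements $Y$ of $k$ facilities in $[0,1]$.
   Context: Agents $1,\dots,n$ ($n\ge1$ arbitrary) report locations $x_1,\dots,x_n\in[0,1]$ (a profile). A mechanism for $k$ facilities maps every profile (for every $n$) to a placement $Y$ of $k$ facility locations in $[0,1]$. For a placement $Y$, agent $i$'s distance is $d_i=\min_{y\in Y}|x_i-y|$ and its utility is $u_i=1-d_i$. The Gini index of utilities of $Y$ is $G_u(Y)=\frac{\sum_{i=1}^n\sum_{j=1}^n|u_i-u_j|}{2n\sum_{i=1}^n u_i}$ (defined when $\sum_i u_i>0$). A mechanism $M$ is strategy proof if for every profile $x$, every agent $i$ and every $x_i'\in[0,1]$, the distance from the true location $x_i$ to the nearest facility of $M(x_1,\dots,x_i',\dots,x_n)$ is not strictly smaller than the distance from $x_i$ to the nearest facility of $M(x)$. The approximation ratio is bounded if there is a constant $c$ with $G_u(M(x))\le c\cdot\min_Y G_u(Y)$ for all profiles $x$. *)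

theory Defs
  imports Complex_Main
begin

definition valid_profile :: "real list \<Rightarrow> bool" where
  "valid_profile xs \<longleftrightarrow> xs \<noteq> [] \<and> set xs \<subseteq> {0..1}"

definition valid_placement :: "nat \<Rightarrow> real list \<Rightarrow> bool" where
  "valid_placement k Y \<longleftrightarrow> length Y = k \<and> set Y \<subseteq> {0..1}"

definition fdist :: "real \<Rightarrow> real list \<Rightarrow> real" where
  "fdist x Y = Min ((\<lambda>y. \<bar>x - y\<bar>) ` set Y)"

definition util :: "real \<Rightarrow> real list \<Rightarrow> real" where
  "util x Y = 1 - fdist x Y"

definition total_util :: "real list \<Rightarrow> real list \<Rightarrow> real" where
  "total_util xs Y = (\<Sum>i<length xs. util (xs ! i) Y)"

text \<open>Gini index of utilities (meaningful only when the total utility is positive).\<close>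
definition gini_u :: "real list \<Rightarrow> real list \<Rightarrow> real" where
  "gini_u xs Y =
     (\<Sum>i<length xs. \<Sum>j<length xs. \<bar>util (xs ! i) Y - util (xs ! j) Y\<bar>)
     / (2 * real (length xs) * total_util xs Y)"

definition opt_gini :: "nat \<Rightarrow> real list \<Rightarrow> real" where
  "opt_gini k xs = (INF Y\<in>{Y. valid_placement k Y \<and> total_util xs Y > 0}. gini_u xs Y)"

definition mechanism :: "nat \<Rightarrow> (real list \<Rightarrow> real list) \<Rightarrow> bool" where
  "mechanism k M \<longleftrightarrow> (\<forall>xs. valid_profile xs \<longrightarrow> valid_placement k (M xs))"

definition strategy_proof :: "(real list \<Rightarrow> real list) \<Rightarrow> bool" where
  "strategy_proof M \<longleftrightarrow>
     (\<forall>xs i x'. valid_profile xs \<longrightarrow> i < length xs \<longrightarrow> x' \<in> {0..1} \<longrightarrow>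
        \<not> (fdist (xs ! i) (M (xs[i := x'])) < fdist (xs ! i) (M xs)))"

end

theory Submission
  imports Defs
begin

text \<open>If some placement makes all agents equidistant from their nearest facilities (with
  positive total utility), the optimal Gini index is 0, so a mechanism with bounded ratio must
  make the agents equidistant as well. On the profile \<open>0, 1/k, 2/k, \<dots>, 1\<close> this forces the
  facility nearest to 0 into \<open>[0, 1/(2k)]\<close>, hence within \<open>1/(4k)\<close> of the point \<open>1/(4k)\<close>.
  On the profile \<open>1/(4k), 1/k, 2/k, \<dots>, 1\<close> the \<open>k + 1\<close> agents are \<open>3/(4k)\<close> apart and two of
  them share one of the \<open>k\<close> facilities, so the common distance is at least \<open>3/(8k)\<close>. Thus the
  agent at \<open>1/(4k)\<close> gains by reporting 0.\<close>

lemma fdist_le: "y \<in> set Y \<Longrightarrow> fdist x Y \<le> \<bar>x - y\<bar>"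
  unfolding fdist_def by (rule Min_le) auto

lemma fdist_attained:
  assumes "Y \<noteq> []"
  shows "\<exists>y\<in>set Y. fdist x Y = \<bar>x - y\<bar>"
proof -
  have "fdist x Y \<in> (\<lambda>y. \<bar>x - y\<bar>) ` set Y"
    unfolding fdist_def using assms by (intro Min_in) auto
  then show ?thesis by auto
qed

lemma fdist_eqI:
  assumes "y \<in> set Y" "\<bar>x - y\<bar> = D" "\<And>y'. y' \<in> set Y \<Longrightarrow> D \<le> \<bar>x - y'\<bar>"
  shows "fdist x Y = D"
  unfolding fdist_def using assms by (intro Min_eqI) auto

lemma fdist_eq_if_separated:
  assumes "y \<in> set Y" "\<bar>x - y\<bar> = D"
    and "\<And>y'. y' \<in> set Y \<Longrightarrow> y' \<noteq> y \<Longrightarrow> 2 * D \<le> \<bar>y' - y\<bar>"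
  shows "fdist x Y = D"
proof (rule fdist_eqI[OF assms(1,2)])
  fix y' assume "y' \<in> set Y"
  show "D \<le> \<bar>x - y'\<bar>"
  proof (cases "y' = y")
    case False
    with \<open>y' \<in> set Y\<close> have "2 * D \<le> \<bar>y' - y\<bar>" by (rule assms(3))
    with assms(2) show ?thesis by linarith
  qed (use assms(2) in simp)
qed

lemma total_util_equidistant:
  assumes "\<forall>x\<in>set xs. fdist x Y = D"
  shows "total_util xs Y = real (length xs) * (1 - D)"
  using assms unfolding total_util_def util_def by (simp add: sum.cong)

lemma gini_u_nonneg: "total_util xs Y > 0 \<Longrightarrow> gini_u xs Y \<ge> 0"
  unfolding gini_u_def by (auto intro!: divide_nonneg_nonneg sum_nonneg)

lemma gini_u_le_0_iff:
  assumes "total_util xs Y > 0"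
  shows "gini_u xs Y \<le> 0 \<longleftrightarrow> (\<forall>x\<in>set xs. \<forall>x'\<in>set xs. fdist x Y = fdist x' Y)"
proof -
  define N where "N = (\<Sum>i<length xs. \<Sum>j<length xs. \<bar>util (xs ! i) Y - util (xs ! j) Y\<bar>)"
  have "xs \<noteq> []" using assms by (auto simp: total_util_def)
  then have "gini_u xs Y = N / (2 * real (length xs) * total_util xs Y)"
    and "2 * real (length xs) * total_util xs Y > 0"
    using assms by (simp_all add: gini_u_def N_def)
  moreover have "N \<ge> 0" unfolding N_def by (intro sum_nonneg) simp
  ultimately have "gini_u xs Y \<le> 0 \<longleftrightarrow> N = 0"
    by (simp add: divide_le_0_iff)
  also have "\<dots> \<longleftrightarrow> (\<forall>i<length xs. \<forall>j<length xs. util (xs ! i) Y = util (xs ! j) Y)"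
    unfolding N_def by (simp add: sum_nonneg_eq_0_iff sum_nonneg Ball_def)
  also have "\<dots> \<longleftrightarrow> (\<forall>x\<in>set xs. \<forall>x'\<in>set xs. fdist x Y = fdist x' Y)"
    by (simp add: util_def all_set_conv_all_nth)
  finally show ?thesis .
qed

lemma opt_gini_eq_0:
  assumes "valid_placement k Y" "\<forall>x\<in>set xs. fdist x Y = D" "D < 1" "xs \<noteq> []"
  shows "opt_gini k xs = 0"
proof -
  have pos: "total_util xs Y > 0"
    using assms(3,4) by (simp add: total_util_equidistant[OF assms(2)])
  with assms(2) have "gini_u xs Y = 0"
    using gini_u_le_0_iff[OF pos] gini_u_nonneg[OF pos] by simp
  then show ?thesis
    unfolding opt_gini_def using assms(1) pos gini_u_nonneg
    by (intro cInf_eq_minimum) auto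
qed

text \<open>Two of the points share a nearest facility; being equidistant from it, they lie on
  opposite sides of it.\<close>
lemma equidistant_pigeonhole:
  assumes "Y \<noteq> []" "card (set Y) < card (set xs)" "\<forall>x\<in>set xs. fdist x Y = D"
  shows "\<exists>x\<in>set xs. \<exists>x'\<in>set xs. x \<noteq> x' \<and> \<bar>x - x'\<bar> = 2 * D"
proof -
  have "\<forall>x. \<exists>y\<in>set Y. fdist x Y = \<bar>x - y\<bar>"
    using fdist_attained[OF assms(1)] by blast
  then obtain f where f: "\<And>x. f x \<in> set Y" "\<And>x. fdist x Y = \<bar>x - f x\<bar>"
    by metis
  have "\<not> inj_on f (set xs)"
  proof
    assume "inj_on f (set xs)"
    then have "card (set xs) \<le> card (set Y)"
      using f(1) by (intro card_inj_on_le) auto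
    with assms(2) show False by simp
  qed
  then obtain x x' where x: "x \<in> set xs" "x' \<in> set xs" "x \<noteq> x'" "f x = f x'"
    unfolding inj_on_def by blast
  then have "\<bar>x - f x\<bar> = D" "\<bar>x' - f x\<bar> = D"
    using assms(3) f(2) by metis+
  with x have "\<bar>x - x'\<bar> = 2 * D" by linarith
  with x show ?thesis by blast
qed

lemma fdist_quarter_le:
  assumes "Y \<noteq> []" "set Y \<subseteq> {0..}" "0 < b" "fdist 0 Y = fdist b Y"
  shows "fdist (b / 4) Y \<le> b / 4"
proof -
  obtain y where y: "y \<in> set Y" "fdist 0 Y = \<bar>0 - y\<bar>"
    using fdist_attained[OF assms(1)] by blast
  have "0 \<le> y" using y(1) assms(2) by auto
  moreover have "y \<le> \<bar>b - y\<bar>"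
    using fdist_le[OF y(1), of b] y(2) assms(4) \<open>0 \<le> y\<close> by simp
  ultimately have "y \<le> b / 2" using assms(3) by (cases "y \<le> b") auto
  then show ?thesis
    using fdist_le[OF y(1), of "b / 4"] \<open>0 \<le> y\<close> by linarith
qed

definition grid_profile :: "nat \<Rightarrow> real \<Rightarrow> real list" where
  "grid_profile k a = a # map (\<lambda>i. real i / real k) [1..<Suc k]"

definition shifted_grid :: "nat \<Rightarrow> real \<Rightarrow> real list" where
  "shifted_grid k D = map (\<lambda>i. real i / real k - D) [1..<Suc k]"

lemma set_grid_profile: "set (grid_profile k a) = insert a ((\<lambda>i. real i / real k) ` {1..k})"
  by (auto simp: grid_profile_def)

lemma set_shifted_grid: "set (shifted_grid k D) = (\<lambda>i. real i / real k - D) ` {1..k}"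
  by (auto simp: shifted_grid_def)

lemma grid_point_bounds:
  assumes "i \<in> {1..k}"
  shows "1 / real k \<le> real i / real k" "real i / real k \<le> 1"
  using assms by (auto simp: divide_right_mono)

lemma grid_gap:
  assumes "k \<ge> 1" "i \<noteq> j"
  shows "1 / real k \<le> \<bar>real i / real k - real j / real k\<bar>"
proof -
  have "1 \<le> \<bar>real i - real j\<bar>" using assms(2) by linarith
  then have "1 / real k \<le> \<bar>real i - real j\<bar> / real k"
    using assms(1) by (intro divide_right_mono) auto
  then show ?thesis by (simp add: diff_divide_distrib[symmetric])
qed

lemma valid_grid_profile:
  assumes "0 \<le> a" "a \<le> 1"
  shows "valid_profile (grid_profile k a)"
  using assms grid_point_bounds(2) unfolding valid_profile_def set_grid_profile
  by (auto simp: grid_profile_def)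

lemma valid_shifted_grid:
  assumes "k \<ge> 1" "0 \<le> D" "D \<le> 1 / (2 * real k)"
  shows "valid_placement k (shifted_grid k D)"
proof -
  have "y \<in> {0..1}" if y: "y \<in> set (shifted_grid k D)" for y
  proof -
    obtain i where i: "i \<in> {1..k}" "y = real i / real k - D"
      using y unfolding set_shifted_grid by blast
    have "1 / (2 * real k) \<le> 1 / real k - D" using assms(3) by (simp add: field_simps)
    moreover have "0 \<le> 1 / (2 * real k)" by simp
    ultimately show ?thesis
      using grid_point_bounds[OF i(1)] i(2) assms(2) unfolding atLeastAtMost_iff by linarith
  qed
  moreover have "length (shifted_grid k D) = k" by (simp add: shifted_grid_def)
  ultimately show ?thesis unfolding valid_placement_def by blast
qed

text \<open>Each agent of \<open>grid_profile k a\<close> lies at distance \<open>D\<close> just right of a facility of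
  \<open>shifted_grid k D\<close>, except the agent at \<open>a = 1/k - 2 D\<close>, which lies at distance \<open>D\<close> left of
  the first facility.\<close>
lemma fdist_grid_profile_shifted_grid:
  assumes "k \<ge> 1" "0 \<le> a" "a \<le> 1 / real k" "x \<in> set (grid_profile k a)"
  shows "fdist x (shifted_grid k ((1 / real k - a) / 2)) = (1 / real k - a) / 2"
proof -
  define D where "D = (1 / real k - a) / 2"
  have D: "0 \<le> D" "2 * D \<le> 1 / real k" using assms(2,3) by (auto simp: D_def)
  have separated: "2 * D \<le> \<bar>y' - y\<bar>"
    if "y \<in> set (shifted_grid k D)" "y' \<in> set (shifted_grid k D)" "y' \<noteq> y" for y y'
    using that D(2) grid_gap[OF assms(1)] unfolding set_shifted_grid by force
  obtain y where "y \<in> set (shifted_grid k D)" "\<bar>x - y\<bar> = D"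
  proof (cases "x = a")
    case True
    have "x - (1 / real k - D) = - D" using True by (simp add: D_def field_simps)
    then show ?thesis
      using that[of "1 / real k - D"] D(1) assms(1) unfolding set_shifted_grid by force
  next
    case False
    then obtain i where "i \<in> {1..k}" "x = real i / real k"
      using assms(4) unfolding set_grid_profile by blast
    then show ?thesis
      using that[of "x - D"] D(1) unfolding set_shifted_grid by force
  qed
  with separated show ?thesis
    unfolding D_def[symmetric] by (intro fdist_eq_if_separated) auto
qed

lemma opt_gini_grid_profile:
  assumes "k \<ge> 1" "0 \<le> a" "a \<le> 1 / real k"
  shows "opt_gini k (grid_profile k a) = 0"
proof (rule opt_gini_eq_0)
  show "valid_placement k (shifted_grid k ((1 / real k - a) / 2))"
    using assms by (intro valid_shifted_grid) (auto simp: field_simps)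
  show "\<forall>x\<in>set (grid_profile k a). fdist x (shifted_grid k ((1 / real k - a) / 2)) = (1 / real k - a) / 2"
    using fdist_grid_profile_shifted_grid[OF assms] by blast
  have "1 / real k \<le> 1" using assms(1) by simp
  then have "1 / real k - a < 2" using assms(2) by linarith
  then show "(1 / real k - a) / 2 < 1" by simp
qed (simp add: grid_profile_def)

lemma grid_profile_separated:
  assumes "k \<ge> 1" "0 \<le> a" "a \<le> 1 / real k"
    and "x \<in> set (grid_profile k a)" "x' \<in> set (grid_profile k a)" "x \<noteq> x'"
  shows "1 / real k - a \<le> \<bar>x - x'\<bar>"
proof -
  have to_a: "1 / real k - a \<le> \<bar>z - a\<bar>" if z: "z \<in> set (grid_profile k a)" "z \<noteq> a" for z
  proof -
    obtain i where "i \<in> {1..k}" "z = real i / real k"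
      using z unfolding set_grid_profile by blast
    with grid_point_bounds(1)[of i k] show ?thesis by linarith
  qed
  consider "x = a" | "x' = a" | "x \<noteq> a" "x' \<noteq> a" by blast
  then show ?thesis
  proof cases
    case 1
    with to_a[OF assms(5)] assms(6) show ?thesis by (simp add: abs_minus_commute)
  next
    case 2
    with to_a[OF assms(4)] assms(6) show ?thesis by simp
  next
    case 3
    then obtain i j where "x = real i / real k" "x' = real j / real k" "i \<noteq> j"
      using assms(4-6) unfolding set_grid_profile by blast
    with grid_gap[OF assms(1), of i j] assms(2) show ?thesis by simp
  qed
qed

lemma card_set_grid_profile:
  assumes "a < 1 / real k"
  shows "card (set (grid_profile k a)) = Suc k"
proof -
  have "a \<notin> (\<lambda>i. real i / real k) ` {1..k}"
    using assms grid_point_bounds(1) by force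
  moreover have "inj_on (\<lambda>i. real i / real k) {1..k}"
    by (auto simp: inj_on_def)
  ultimately show ?thesis
    unfolding set_grid_profile by (simp add: card_image)
qed

lemma fdist_ge_if_equidistant_on_grid_profile:
  assumes "k \<ge> 1" "0 \<le> a" "a < 1 / real k" "valid_placement k Y"
    and "\<forall>x\<in>set (grid_profile k a). fdist x Y = fdist a Y"
  shows "(1 / real k - a) / 2 \<le> fdist a Y"
proof -
  have "Y \<noteq> []" "card (set Y) \<le> k"
    using assms(1,4) card_length[of Y] by (auto simp: valid_placement_def)
  then have "card (set Y) < card (set (grid_profile k a))"
    by (simp add: card_set_grid_profile[OF assms(3)])
  then obtain x x' where "x \<in> set (grid_profile k a)" "x' \<in> set (grid_profile k a)" "x \<noteq> x'"
      "\<bar>x - x'\<bar> = 2 * fdist a Y"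
    using equidistant_pigeonhole[OF \<open>Y \<noteq> []\<close> _ assms(5)] by blast
  with grid_profile_separated[OF assms(1,2)] assms(3) show ?thesis by force
qed

lemma equidistant_if_gini_bounded_on_grid_profile:
  assumes "k \<ge> 1" "0 \<le> a" "a \<le> 1 / real k"
    and "total_util (grid_profile k a) Y > 0"
    and "gini_u (grid_profile k a) Y \<le> c * opt_gini k (grid_profile k a)"
  shows "\<forall>x\<in>set (grid_profile k a). fdist x Y = fdist a Y"
proof -
  have "gini_u (grid_profile k a) Y \<le> 0"
    using assms(5) opt_gini_grid_profile[OF assms(1-3)] by simp
  moreover have "a \<in> set (grid_profile k a)" by (simp add: grid_profile_def)
  ultimately show ?thesis using gini_u_le_0_iff[OF assms(4)] by blast
qed

theorem theorem1:
  fixes k :: nat and M :: "real list \<Rightarrow> real list" and c :: real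
  assumes "k \<ge> 1" and "mechanism k M" and "strategy_proof M" and "c > 0"
  shows "\<exists>xs. valid_profile xs \<and>
           \<not> (total_util xs (M xs) > 0 \<and> gini_u xs (M xs) \<le> c * opt_gini k xs)"
proof (rule ccontr)
  assume "\<not> ?thesis"
  then have bounded: "total_util xs (M xs) > 0 \<and> gini_u xs (M xs) \<le> c * opt_gini k xs"
    if "valid_profile xs" for xs
    using that by blast
  define b where "b = 1 / real k"
  have b: "0 < b" "b \<le> 1" using assms(1) by (auto simp: b_def)
  have valid: "valid_profile (grid_profile k a)" "valid_placement k (M (grid_profile k a))"
    if "0 \<le> a" "a \<le> b" for a
    using that b assms(2) valid_grid_profile unfolding mechanism_def by auto
  \<comment> \<open>The optimum is 0 on grid profiles, so neither the value nor the sign of \<open>c\<close> matters.\<close>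
  have equidistant:
    "\<forall>x\<in>set (grid_profile k a). fdist x (M (grid_profile k a)) = fdist a (M (grid_profile k a))"
    if "0 \<le> a" "a \<le> b" for a
    using bounded[OF valid(1)[OF that]] that unfolding b_def
    by (intro equidistant_if_gini_bounded_on_grid_profile assms(1)) auto
  define d_lie where "d_lie = fdist (b / 4) (M (grid_profile k 0))"
  define d_true where "d_true = fdist (b / 4) (M (grid_profile k (b / 4)))"
  have "d_lie \<le> b / 4" unfolding d_lie_def
  proof (rule fdist_quarter_le)
    show "M (grid_profile k 0) \<noteq> []" "set (M (grid_profile k 0)) \<subseteq> {0..}"
      using valid(2)[of 0] b assms(1) by (auto simp: valid_placement_def)
    show "fdist 0 (M (grid_profile k 0)) = fdist b (M (grid_profile k 0))"
      using equidistant[of 0] b assms(1) unfolding b_def set_grid_profile by force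
  qed (use b in simp)
  moreover have "(b - b / 4) / 2 \<le> d_true"
    using fdist_ge_if_equidistant_on_grid_profile[OF assms(1), of "b / 4", folded b_def]
      valid(2) equidistant b
    unfolding d_true_def by simp
  moreover have "\<not> d_lie < d_true"
    using assms(3)[unfolded strategy_proof_def, rule_format, of "grid_profile k (b / 4)" 0 0]
      valid(1)[of "b / 4"] b
    unfolding d_lie_def d_true_def by (simp add: grid_profile_def)
  ultimately show False using b by (simp add: field_simps)
qed

end
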